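(* Let $\mathbf{X}=(X_1,\dots,X_d)$ be a random vector with distribution function $F$ such that each $X_i$ is a.s. nonnegative with $0<E(X_i)<\infty$, and let $\|\mathbf{x}\|_F=E(\max(|x_0|,|x_1|X_1,\dots,|x_d|X_d))$ for $\mathbf{x}\in\mathbb{R}^{d+1}$. Then for any $x_1,\dots,x_d>0$, the right-derivative of $t\mapsto\|(t,1/x_1,\dots,1/x_d)\|_F$ at $t=1$ exists and equals $F(x_1,\dots,x_d)$. *)

theory Defs
  imports "HOL-Probability.Probability"
begin

text \<open>The random vector X = (X_1,...,X_d) is indexed by a finite type 'd
 (so d = CARD('d) >= 1).  Its distribution function is
 F(x) = P(X_i <= x_i for all i).\<close>

definition distr_fun :: "'a measure \<Rightarrow> ('d::finite \<Rightarrow> 'a \<Rightarrow> real) \<Rightarrow> ('d \<Rightarrow> real) \<Rightarrow> real" where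
  "distr_fun M X x = measure M {\<omega> \<in> space M. \<forall>i. X i \<omega> \<le> x i}"

definition D_norm :: "'a measure \<Rightarrow> ('d::finite \<Rightarrow> 'a \<Rightarrow> real) \<Rightarrow> real \<Rightarrow> ('d \<Rightarrow> real) \<Rightarrow> real" where
  "D_norm M X x0 x = integral\<^sup>L M (\<lambda>\<omega>. max \<bar>x0\<bar> (Max (range (\<lambda>i. \<bar>x i\<bar> * X i \<omega>))))"

end

theory Submission
  imports Defs
begin

text \<open>Writing \<open>Y = max\<^sub>i X\<^sub>i / x\<^sub>i\<close>, the D-norm in question is \<open>t \<mapsto> E(max t Y)\<close> for \<open>t > 0\<close>.
  The difference quotient \<open>(max t y - max 1 y) / (t - 1)\<close> lies in \<open>[0, 1]\<close> and tends to
  the indicator of \<open>y \<le> 1\<close> as \<open>t \<down> 1\<close>, so by dominated convergence the right derivative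
  is \<open>P(Y \<le> 1) = F(x\<^sub>1, \<dots>, x\<^sub>d)\<close>.\<close>

lemma integral_dominated_convergence_at_right:
  fixes s :: "real \<Rightarrow> 'a \<Rightarrow> 'b::{banach, second_countable_topology}"
    and f :: "'a \<Rightarrow> 'b" and w :: "'a \<Rightarrow> real"
  assumes "f \<in> borel_measurable M" "\<And>t. s t \<in> borel_measurable M" "integrable M w"
    and lim: "AE \<omega> in M. ((\<lambda>t. s t \<omega>) \<longlongrightarrow> f \<omega>) (at_right a)"
    and bound: "\<forall>\<^sub>F t in at_right a. AE \<omega> in M. norm (s t \<omega>) \<le> w \<omega>"
  shows "((\<lambda>t. integral\<^sup>L M (s t)) \<longlongrightarrow> integral\<^sup>L M f) (at_right a)"
proof -
  obtain b where "a < b" and b: "\<And>t. a < t \<Longrightarrow> t < b \<Longrightarrow> AE \<omega> in M. norm (s t \<omega>) \<le> w \<omega>"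
    using bound by (auto simp: eventually_at_right[OF less_add_one])
  show ?thesis
  proof (rule tendsto_at_right_sequentially[OF \<open>a < b\<close>])
    fix S :: "nat \<Rightarrow> real"
    assume S: "\<And>n. a < S n" "\<And>n. S n < b" and "S \<longlonglongrightarrow> a"
    then have S_at_right: "filterlim S (at_right a) sequentially"
      by (auto simp: filterlim_at less_imp_neq[symmetric] intro!: always_eventually)
    show "(\<lambda>n. integral\<^sup>L M (s (S n))) \<longlonglongrightarrow> integral\<^sup>L M f"
    proof (rule integral_dominated_convergence)
      show "AE \<omega> in M. (\<lambda>n. s (S n) \<omega>) \<longlonglongrightarrow> f \<omega>"
        using lim by eventually_elim (rule filterlim_compose[OF _ S_at_right])
      show "AE \<omega> in M. norm (s (S n) \<omega>) \<le> w \<omega>" for n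
        using S by (rule b)
    qed (use assms in auto)
  qed
qed

lemma abs_max_diff_quotient_le_1:
  fixes a t y :: real
  assumes "a < t"
  shows "\<bar>(max t y - max a y) / (t - a)\<bar> \<le> 1"
proof -
  have "0 \<le> max t y - max a y" "max t y - max a y \<le> t - a"
    using assms by auto
  then show ?thesis
    using assms by (simp add: abs_le_iff divide_le_eq_1)
qed

lemma tendsto_max_diff_quotient:
  fixes a y :: real
  shows "((\<lambda>t. (max t y - max a y) / (t - a)) \<longlongrightarrow> indicator {..a} y) (at_right a)"
proof (cases "y \<le> a")
  case True
  have "\<forall>\<^sub>F t in at_right a. (max t y - max a y) / (t - a) = 1"
    using eventually_at_right_less[of a] by eventually_elim (use True in auto)
  then show ?thesis
    using True by (simp add: tendsto_eventually)
next
  case False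
  then have "\<forall>\<^sub>F t in at_right a. t < y"
    by (simp add: eventually_at_right_field) (meson dense not_le)
  then have "\<forall>\<^sub>F t in at_right a. (max t y - max a y) / (t - a) = 0"
    by eventually_elim (use False in auto)
  then show ?thesis
    using False by (simp add: tendsto_eventually)
qed

lemma (in finite_measure) expectation_max_right_derivative:
  fixes Y :: "'a \<Rightarrow> real"
  assumes "integrable M Y"
  shows "((\<lambda>t. ((\<integral>\<omega>. max t (Y \<omega>) \<partial>M) - (\<integral>\<omega>. max a (Y \<omega>) \<partial>M)) / (t - a))
           \<longlongrightarrow> measure M {\<omega> \<in> space M. Y \<omega> \<le> a}) (at_right a)"
proof -
  have [measurable]: "Y \<in> borel_measurable M"
    using assms by auto
  define q where "q t \<omega> = (max t (Y \<omega>) - max a (Y \<omega>)) / (t - a)" for t \<omega>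
  have "((\<lambda>t. integral\<^sup>L M (q t)) \<longlongrightarrow> integral\<^sup>L M (\<lambda>\<omega>. indicator {..a} (Y \<omega>) :: real))
          (at_right a)"
  proof (rule integral_dominated_convergence_at_right[where w = "\<lambda>_. 1"])
    show "AE \<omega> in M. ((\<lambda>t. q t \<omega>) \<longlongrightarrow> indicator {..a} (Y \<omega>)) (at_right a)"
      unfolding q_def by (simp add: tendsto_max_diff_quotient)
    show "\<forall>\<^sub>F t in at_right a. AE \<omega> in M. norm (q t \<omega>) \<le> 1"
      using eventually_at_right_less[of a]
      by eventually_elim (simp add: q_def abs_max_diff_quotient_le_1)
    show "q t \<in> borel_measurable M" for t
      unfolding q_def by measurable
  qed auto
  moreover have "integral\<^sup>L M (q t)
      = ((\<integral>\<omega>. max t (Y \<omega>) \<partial>M) - (\<integral>\<omega>. max a (Y \<omega>) \<partial>M)) / (t - a)" for t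
    unfolding q_def using assms by simp
  moreover have "integral\<^sup>L M (\<lambda>\<omega>. indicator {..a} (Y \<omega>) :: real)
      = integral\<^sup>L M (indicator {\<omega> \<in> space M. Y \<omega> \<le> a})"
    by (rule Bochner_Integration.integral_cong) (auto simp: indicator_def)
  ultimately show ?thesis
    by simp
qed

lemma integrable_Max_range:
  fixes f :: "'i::finite \<Rightarrow> 'a \<Rightarrow> real"
  assumes "\<And>i. integrable M (f i)"
  shows "integrable M (\<lambda>\<omega>. Max (range (\<lambda>i. f i \<omega>)))"
proof (rule Bochner_Integration.integrable_bound)
  show "integrable M (\<lambda>\<omega>. \<Sum>i\<in>UNIV. \<bar>f i \<omega>\<bar>)"
    using assms by auto
  show "(\<lambda>\<omega>. Max (range (\<lambda>i. f i \<omega>))) \<in> borel_measurable M"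
    using assms by (intro borel_measurable_Max) auto
  show "AE \<omega> in M. norm (Max (range (\<lambda>i. f i \<omega>))) \<le> norm (\<Sum>i\<in>UNIV. \<bar>f i \<omega>\<bar>)"
  proof (rule AE_I2)
    fix \<omega>
    have "Max (range (\<lambda>i. f i \<omega>)) \<in> range (\<lambda>i. f i \<omega>)"
      by (rule Max_in) auto
    then obtain j where "Max (range (\<lambda>i. f i \<omega>)) = f j \<omega>"
      by blast
    moreover have "\<bar>f j \<omega>\<bar> \<le> (\<Sum>i\<in>UNIV. \<bar>f i \<omega>\<bar>)"
      by (rule member_le_sum) auto
    ultimately show "norm (Max (range (\<lambda>i. f i \<omega>))) \<le> norm (\<Sum>i\<in>UNIV. \<bar>f i \<omega>\<bar>)"
      by simp
  qed
qed

lemma Max_range_scaled_le_1_iff: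
  fixes x z :: "'i::finite \<Rightarrow> real"
  assumes "\<And>i. x i > 0"
  shows "Max (range (\<lambda>i. \<bar>1 / x i\<bar> * z i)) \<le> 1 \<longleftrightarrow> (\<forall>i. z i \<le> x i)"
proof -
  have "\<bar>1 / x i\<bar> * z i \<le> 1 \<longleftrightarrow> z i \<le> x i" for i
    using assms[of i] by (simp add: field_simps)
  then show ?thesis
    by (subst Max_le_iff) auto
qed

theorem corollary2p13:
  fixes M :: "'a measure" and X :: "'d::finite \<Rightarrow> 'a \<Rightarrow> real" and x :: "'d \<Rightarrow> real"
  assumes "prob_space M"
    and "\<And>i. X i \<in> borel_measurable M"
    and "\<And>i. AE \<omega> in M. X i \<omega> \<ge> 0"
    and "\<And>i. integrable M (X i)"
    and "\<And>i. integral\<^sup>L M (X i) > 0"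
    and "\<And>i. x i > 0"
  shows "((\<lambda>t. (D_norm M X t (\<lambda>i. 1 / x i) - D_norm M X 1 (\<lambda>i. 1 / x i)) / (t - 1))
            \<longlongrightarrow> distr_fun M X x) (at_right 1)"
proof -
  interpret prob_space M by fact
  define Y where "Y \<omega> = Max (range (\<lambda>i. \<bar>1 / x i\<bar> * X i \<omega>))" for \<omega>
  have "integrable M Y"
    unfolding Y_def using assms(4) by (intro integrable_Max_range) auto
  then have "((\<lambda>t. ((\<integral>\<omega>. max t (Y \<omega>) \<partial>M) - (\<integral>\<omega>. max 1 (Y \<omega>) \<partial>M)) / (t - 1))
               \<longlongrightarrow> measure M {\<omega> \<in> space M. Y \<omega> \<le> 1}) (at_right 1)"
    by (rule expectation_max_right_derivative)
  moreover have "Y \<omega> \<le> 1 \<longleftrightarrow> (\<forall>i. X i \<omega> \<le> x i)" for \<omega>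
    unfolding Y_def by (rule Max_range_scaled_le_1_iff[OF assms(6)])
  then have "measure M {\<omega> \<in> space M. Y \<omega> \<le> 1} = distr_fun M X x"
    by (simp add: distr_fun_def)
  moreover have "\<forall>\<^sub>F t in at_right 1.
      ((\<integral>\<omega>. max t (Y \<omega>) \<partial>M) - (\<integral>\<omega>. max 1 (Y \<omega>) \<partial>M)) / (t - 1)
      = (D_norm M X t (\<lambda>i. 1 / x i) - D_norm M X 1 (\<lambda>i. 1 / x i)) / (t - 1)"
    using eventually_at_right_less[of 1]
    by eventually_elim (simp add: D_norm_def Y_def)
  ultimately show ?thesis
    by (simp add: tendsto_cong)
qed

end
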